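(* Let $R \in \mathcal{R}$. Then there exists a nice set $X$ such that $R = X \to \mathcal{N}$, where $X \to \mathcal{N} = \{t \in \mathcal{T} : (t\;\bar{w}) \in \mathcal{N} \text{ for each } \bar{w} \in X\}$.
   Context: With disjoint sets of $\lambda$-variables $x,y,\dots$ and $\mu$-variables $a,b,\dots$, terms and $\mathcal{E}$-terms are $\mathcal{T} ::= x \mid \lambda x.\mathcal{T} \mid (\mathcal{T}\;\mathcal{E}) \mid \langle \mathcal{T},\mathcal{T}\rangle \mid \omega_1\mathcal{T} \mid \omega_2\mathcal{T} \mid \mu a.\mathcal{T} \mid (a\;\mathcal{T})$, $\mathcal{E} ::= \mathcal{T} \mid \pi_1 \mid \pi_2 \mid [x.\mathcal{T}, y.\mathcal{T}]$ (up to renaming of bound variables). The one-step reduction $\triangleright$ is the closure under all constructors of: $(\lambda x.u\;v)\triangleright u[x:=v]$; $(\langle t_1,t_2\rangle\;\pi_i)\triangleright t_i$; $(\omega_i t\;[x_1.u_1,x_2.u_2])\triangleright u_i[x_i:=t]$; $((t\;[x_1.u_1,x_2.u_2])\;\varepsilon)\triangleright(t\;[x_1.(u_1\;\varepsilon),x_2.(u_2\;\varepsilon)])$; $(\mu a.t\;\varepsilon)\triangleright\mu a.t[a:=^*\varepsilon]$, where $t[a:=^*\varepsilon]$ replaces inductively each subterm $(a\;v)$ by $(a\;(v\;\varepsilon))$. $\mathcal{N}$ (resp. $\mathcal{N}'$) is the set of strongly normalizable terms (resp. $\mathcal{E}$-terms), and $\mathcal{N}'^{<\omega}$ the set of finite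 sequences of elements of $\mathcal{N}'$. For $\bar{w}=w_1\dots w_n$ and a term $t$, $(t\;\bar{w})$ is $t$ if $n=0$ and $((t\;w_1)\;w_2\dots w_n)$ otherwise. A sequence $\bar{w}\in\mathcal{N}'^{<\omega}$ is nice iff none of $w_1,\dots,w_{n-1}$ is of the form $[x.u,y.v]$; a set $X\subseteq\mathcal{N}'^{<\omega}$ is nice iff all its elements are nice sequences. For sets $K,L$ of terms: $K\to L=\{t\in\mathcal{T} : (t\;u)\in L \text{ for all } u\in K\}$; $K\wedge L=\{t : (t\;\pi_1)\in K, (t\;\pi_2)\in L\}$; $K\vee L=\{t :$ for all $\lambda$-variables $x,y$ and all $u,v\in\mathcal{N}$, if $u[x:=r]\in\mathcal{N}$ and $v[y:=s]\in\mathcal{N}$ for all $r\in K,s\in L$, then $(t\;[x.u,y.v])\in\mathcal{N}\}$. $\mathcal{R}$ is the smallest set of sets of terms containing $\mathcal{N}$ and closed under $\to,\wedge,\vee$. *)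

theory Defs
  imports Main
begin

text \<open>There are two independent index spaces: lambda-variables (Var, bound by Lam and by
  the two branches of Case) and mu-variables (MApp, bound by Mu).\<close>

datatype trm =
    Var nat
  | Lam trm
  | App trm etm
  | Pair trm trm
  | Inj1 trm
  | Inj2 trm
  | Mu trm
  | MApp nat trm
and etm =
    ETrm trm
  | Proj1
  | Proj2
  | Case trm trm

primrec lift_t :: "nat \<Rightarrow> trm \<Rightarrow> trm" and lift_e :: "nat \<Rightarrow> etm \<Rightarrow> etm" where
  "lift_t k (Var n) = Var (if n < k then n else Suc n)"
| "lift_t k (Lam t) = Lam (lift_t (Suc k) t)"
| "lift_t k (App t e) = App (lift_t k t) (lift_e k e)"
| "lift_t k (Pair t u) = Pair (lift_t k t) (lift_t k u)"
| "lift_t k (Inj1 t) = Inj1 (lift_t k t)"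
| "lift_t k (Inj2 t) = Inj2 (lift_t k t)"
| "lift_t k (Mu t) = Mu (lift_t k t)"
| "lift_t k (MApp a t) = MApp a (lift_t k t)"
| "lift_e k (ETrm t) = ETrm (lift_t k t)"
| "lift_e k Proj1 = Proj1"
| "lift_e k Proj2 = Proj2"
| "lift_e k (Case u v) = Case (lift_t (Suc k) u) (lift_t (Suc k) v)"

primrec mlift_t :: "nat \<Rightarrow> trm \<Rightarrow> trm" and mlift_e :: "nat \<Rightarrow> etm \<Rightarrow> etm" where
  "mlift_t k (Var n) = Var n"
| "mlift_t k (Lam t) = Lam (mlift_t k t)"
| "mlift_t k (App t e) = App (mlift_t k t) (mlift_e k e)"
| "mlift_t k (Pair t u) = Pair (mlift_t k t) (mlift_t k u)"
| "mlift_t k (Inj1 t) = Inj1 (mlift_t k t)"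
| "mlift_t k (Inj2 t) = Inj2 (mlift_t k t)"
| "mlift_t k (Mu t) = Mu (mlift_t (Suc k) t)"
| "mlift_t k (MApp a t) = MApp (if a < k then a else Suc a) (mlift_t k t)"
| "mlift_e k (ETrm t) = ETrm (mlift_t k t)"
| "mlift_e k Proj1 = Proj1"
| "mlift_e k Proj2 = Proj2"
| "mlift_e k (Case u v) = Case (mlift_t k u) (mlift_t k v)"

primrec subst_t :: "trm \<Rightarrow> nat \<Rightarrow> trm \<Rightarrow> trm" and subst_e :: "etm \<Rightarrow> nat \<Rightarrow> trm \<Rightarrow> etm" where
  "subst_t (Var n) k s = (if n < k then Var n else if n = k then s else Var (n - 1))"
| "subst_t (Lam t) k s = Lam (subst_t t (Suc k) (lift_t 0 s))"
| "subst_t (App t e) k s = App (subst_t t k s) (subst_e e k s)"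
| "subst_t (Pair t u) k s = Pair (subst_t t k s) (subst_t u k s)"
| "subst_t (Inj1 t) k s = Inj1 (subst_t t k s)"
| "subst_t (Inj2 t) k s = Inj2 (subst_t t k s)"
| "subst_t (Mu t) k s = Mu (subst_t t k (mlift_t 0 s))"
| "subst_t (MApp a t) k s = MApp a (subst_t t k s)"
| "subst_e (ETrm t) k s = ETrm (subst_t t k s)"
| "subst_e Proj1 k s = Proj1"
| "subst_e Proj2 k s = Proj2"
| "subst_e (Case u v) k s = Case (subst_t u (Suc k) (lift_t 0 s)) (subst_t v (Suc k) (lift_t 0 s))"

primrec msubst_t :: "trm \<Rightarrow> nat \<Rightarrow> etm \<Rightarrow> trm" and msubst_e :: "etm \<Rightarrow> nat \<Rightarrow> etm \<Rightarrow> etm" where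
  "msubst_t (Var n) a e = Var n"
| "msubst_t (Lam t) a e = Lam (msubst_t t a (lift_e 0 e))"
| "msubst_t (App t f) a e = App (msubst_t t a e) (msubst_e f a e)"
| "msubst_t (Pair t u) a e = Pair (msubst_t t a e) (msubst_t u a e)"
| "msubst_t (Inj1 t) a e = Inj1 (msubst_t t a e)"
| "msubst_t (Inj2 t) a e = Inj2 (msubst_t t a e)"
| "msubst_t (Mu t) a e = Mu (msubst_t t (Suc a) (mlift_e 0 e))"
| "msubst_t (MApp b t) a e =
     (if b = a then MApp b (App (msubst_t t a e) e) else MApp b (msubst_t t a e))"
| "msubst_e (ETrm t) a e = ETrm (msubst_t t a e)"
| "msubst_e Proj1 a e = Proj1"
| "msubst_e Proj2 a e = Proj2"
| "msubst_e (Case u v) a e = Case (msubst_t u a (lift_e 0 e)) (msubst_t v a (lift_e 0 e))"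

inductive red :: "trm \<Rightarrow> trm \<Rightarrow> bool" and red_e :: "etm \<Rightarrow> etm \<Rightarrow> bool" where
  beta: "red (App (Lam u) (ETrm v)) (subst_t u 0 v)"
| proj1: "red (App (Pair t1 t2) Proj1) t1"
| proj2: "red (App (Pair t1 t2) Proj2) t2"
| case1: "red (App (Inj1 t) (Case u1 u2)) (subst_t u1 0 t)"
| case2: "red (App (Inj2 t) (Case u1 u2)) (subst_t u2 0 t)"
| comm: "red (App (App t (Case u1 u2)) e)
             (App t (Case (App u1 (lift_e 0 e)) (App u2 (lift_e 0 e))))"
| mu: "red (App (Mu t) e) (Mu (msubst_t t 0 (mlift_e 0 e)))"
| c_lam: "red t t' \<Longrightarrow> red (Lam t) (Lam t')"
| c_app1: "red t t' \<Longrightarrow> red (App t e) (App t' e)"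
| c_app2: "red_e e e' \<Longrightarrow> red (App t e) (App t e')"
| c_pair1: "red t t' \<Longrightarrow> red (Pair t u) (Pair t' u)"
| c_pair2: "red u u' \<Longrightarrow> red (Pair t u) (Pair t u')"
| c_inj1: "red t t' \<Longrightarrow> red (Inj1 t) (Inj1 t')"
| c_inj2: "red t t' \<Longrightarrow> red (Inj2 t) (Inj2 t')"
| c_mu: "red t t' \<Longrightarrow> red (Mu t) (Mu t')"
| c_mapp: "red t t' \<Longrightarrow> red (MApp a t) (MApp a t')"
| c_etrm: "red t t' \<Longrightarrow> red_e (ETrm t) (ETrm t')"
| c_case1: "red u u' \<Longrightarrow> red_e (Case u v) (Case u' v)"
| c_case2: "red v v' \<Longrightarrow> red_e (Case u v) (Case u v')"

definition SN :: "trm set" where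
  "SN = {t. Wellfounded.accp (\<lambda>y x. red x y) t}"

definition SN_e :: "etm set" where
  "SN_e = {e. Wellfounded.accp (\<lambda>y x. red_e x y) e}"

definition app_seq :: "trm \<Rightarrow> etm list \<Rightarrow> trm" where
  "app_seq t ws = foldl App t ws"

fun is_case :: "etm \<Rightarrow> bool" where
  "is_case (Case u v) = True"
| "is_case _ = False"

definition nice_seq :: "etm list \<Rightarrow> bool" where
  "nice_seq ws \<longleftrightarrow> (\<forall>i. i + 1 < length ws \<longrightarrow> \<not> is_case (ws ! i))"

definition nice_set :: "etm list set \<Rightarrow> bool" where
  "nice_set X \<longleftrightarrow> X \<subseteq> lists SN_e \<and> (\<forall>ws\<in>X. nice_seq ws)"

definition seq_arrow :: "etm list set \<Rightarrow> trm set" where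
  "seq_arrow X = {t. \<forall>ws\<in>X. app_seq t ws \<in> SN}"

definition arrow :: "trm set \<Rightarrow> trm set \<Rightarrow> trm set" where
  "arrow K L = {t. \<forall>u\<in>K. App t (ETrm u) \<in> L}"

definition conj_set :: "trm set \<Rightarrow> trm set \<Rightarrow> trm set" where
  "conj_set K L = {t. App t Proj1 \<in> K \<and> App t Proj2 \<in> L}"

text \<open>K \<or> L; the bound variables x, y of [x.u, y.v] are de Bruijn index 0 in u and v.\<close>
definition disj_set :: "trm set \<Rightarrow> trm set \<Rightarrow> trm set" where
  "disj_set K L = {t. \<forall>u v. u \<in> SN \<and> v \<in> SN \<and>
      (\<forall>r\<in>K. subst_t u 0 r \<in> SN) \<and> (\<forall>s\<in>L. subst_t v 0 s \<in> SN)
      \<longrightarrow> App t (Case u v) \<in> SN}"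

inductive_set RR :: "trm set set" where
  "SN \<in> RR"
| "K \<in> RR \<Longrightarrow> L \<in> RR \<Longrightarrow> arrow K L \<in> RR"
| "K \<in> RR \<Longrightarrow> L \<in> RR \<Longrightarrow> conj_set K L \<in> RR"
| "K \<in> RR \<Longrightarrow> L \<in> RR \<Longrightarrow> disj_set K L \<in> RR"

end

theory Submission
  imports Defs
begin

text \<open>Every set of \<open>RR\<close> is \<open>seq_arrow X\<close> for the elimination sequences its members must
  survive: \<open>[]\<close> for \<open>SN\<close>, \<open>ETrm u # ws\<close> for \<open>arrow K L\<close>, \<open>Proj\<^sub>i # ws\<close> for \<open>conj_set K L\<close>
  and single eliminations \<open>[Case u v]\<close> for \<open>disj_set K L\<close>. Only eliminations other than
  \<open>Case\<close> are ever prepended, so the sequences stay nice. Their entries are strongly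
  normalizing because each such set contains the variables and lies in \<open>SN\<close>: a variable
  applied to a nice sequence of strongly normalizing eliminations creates no redex.\<close>

lemma SN_I: "(\<And>t'. red t t' \<Longrightarrow> t' \<in> SN) \<Longrightarrow> t \<in> SN"
  unfolding SN_def by (auto intro: accp.accI)

lemma SN_e_I: "(\<And>e'. red_e e e' \<Longrightarrow> e' \<in> SN_e) \<Longrightarrow> e \<in> SN_e"
  unfolding SN_e_def by (auto intro: accp.accI)

lemma SN_induct [consumes 1, case_names step]:
  assumes "t \<in> SN"
    and "\<And>t. t \<in> SN \<Longrightarrow> (\<And>t'. red t t' \<Longrightarrow> P t') \<Longrightarrow> P t"
  shows "P t"
  using assms unfolding SN_def by (auto elim: accp_induct_rule)

lemma SN_e_induct [consumes 1, case_names step]: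
  assumes "e \<in> SN_e"
    and "\<And>e. e \<in> SN_e \<Longrightarrow> (\<And>e'. red_e e e' \<Longrightarrow> P e') \<Longrightarrow> P e"
  shows "P e"
  using assms unfolding SN_e_def by (auto elim: accp_induct_rule)

lemma SN_AppD: "App t e \<in> SN \<Longrightarrow> t \<in> SN"
proof -
  have "s = App t e \<Longrightarrow> t \<in> SN" if "s \<in> SN" for s t
    using that
  proof (induction arbitrary: t rule: SN_induct)
    case (step s)
    show ?case
      by (rule SN_I) (use step red_red_e.c_app1 in blast)
  qed
  then show "App t e \<in> SN \<Longrightarrow> t \<in> SN" by blast
qed

lemma Var_SN: "Var n \<in> SN"
  by (rule SN_I) (erule red.cases; simp)

lemma ETrm_SN_e: "u \<in> SN \<Longrightarrow> ETrm u \<in> SN_e"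
proof (induction rule: SN_induct)
  case (step u)
  show ?case
    by (rule SN_e_I) (use step in \<open>auto elim: red_e.cases\<close>)
qed

lemma Proj1_SN_e: "Proj1 \<in> SN_e"
  by (rule SN_e_I) (erule red_e.cases; simp)

lemma Proj2_SN_e: "Proj2 \<in> SN_e"
  by (rule SN_e_I) (erule red_e.cases; simp)

lemma Case_SN_e: "u \<in> SN \<Longrightarrow> v \<in> SN \<Longrightarrow> Case u v \<in> SN_e"
proof (induction u arbitrary: v rule: SN_induct)
  case (step u)
  note IH_u = step(2)
  from step.prems show ?case
  proof (induction v rule: SN_induct)
    case (step v)
    show ?case
      by (rule SN_e_I) (use IH_u step in \<open>auto elim: red_e.cases\<close>)
  qed
qed

inductive neutral :: "trm \<Rightarrow> bool" where
  neutral_Var: "neutral (Var n)"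
| neutral_App: "neutral t \<Longrightarrow> \<not> is_case e \<Longrightarrow> neutral (App t e)"

lemma red_e_is_case: "red_e e e' \<Longrightarrow> is_case e' = is_case e"
  by (cases rule: red_e.cases) auto

lemma neutral_red: "neutral t \<Longrightarrow> red t t' \<Longrightarrow> neutral t'"
proof (induction t arbitrary: t' rule: neutral.induct)
  case (neutral_Var n)
  then show ?case by (auto elim: red.cases)
next
  case (neutral_App t e)
  from neutral_App.prems show ?case
  proof (cases rule: red.cases)
    case (c_app1 t'')
    then show ?thesis using neutral_App by (auto intro: neutral.intros)
  next
    case (c_app2 e')
    then show ?thesis using neutral_App red_e_is_case by (auto intro: neutral.intros)
  qed (use neutral_App in \<open>auto elim: neutral.cases\<close>)
qed

text \<open>A neutral head can neither be a \<open>Lam\<close>, \<open>Pair\<close>, \<open>Inj\<close> or \<open>Mu\<close>, nor of the form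
  \<open>App s (Case u v)\<close>, so \<open>App t e\<close> only reduces inside \<open>t\<close> or \<open>e\<close>.\<close>

lemma neutral_App_SN: "t \<in> SN \<Longrightarrow> e \<in> SN_e \<Longrightarrow> neutral t \<Longrightarrow> App t e \<in> SN"
proof (induction t arbitrary: e rule: SN_induct)
  case (step t)
  note IH_t = step(2) and neutral_t = step(4)
  from \<open>e \<in> SN_e\<close> show ?case
  proof (induction e rule: SN_e_induct)
    case (step e)
    show ?case
    proof (rule SN_I)
      fix s assume "red (App t e) s"
      then show "s \<in> SN"
      proof (cases rule: red.cases)
        case (c_app1 t')
        then show ?thesis using IH_t step(1) neutral_red[OF neutral_t] by blast
      next
        case (c_app2 e')
        then show ?thesis using step(2) by blast
      qed (use neutral_t in \<open>auto elim: neutral.cases\<close>)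
    qed
  qed
qed

lemma app_seq_Cons: "app_seq t (e # ws) = app_seq (App t e) ws"
  by (simp add: app_seq_def)

lemma app_seq_snoc: "app_seq t (ws @ [e]) = App (app_seq t ws) e"
  by (simp add: app_seq_def)

lemma app_seq_SND: "app_seq t ws \<in> SN \<Longrightarrow> t \<in> SN"
  by (induction ws arbitrary: t) (auto simp: app_seq_Cons app_seq_def dest: SN_AppD)

lemma nice_seq_Cons: "nice_seq ws \<Longrightarrow> \<not> is_case e \<Longrightarrow> nice_seq (e # ws)"
  unfolding nice_seq_def by (auto simp: nth_Cons split: nat.split)

lemma nice_seq_snoc: "nice_seq (ws @ [e]) \<longleftrightarrow> (\<forall>e'\<in>set ws. \<not> is_case e')"
  unfolding nice_seq_def by (auto simp: in_set_conv_nth nth_append) (metis nth_mem)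

lemma app_seq_Var_SN:
  assumes "nice_seq ws" and "ws \<in> lists SN_e"
  shows "app_seq (Var n) ws \<in> SN"
  using assms
proof (induction ws rule: rev_induct)
  case Nil
  then show ?case by (simp add: app_seq_def Var_SN)
next
  case (snoc e ws)
  have no_case: "\<forall>e'\<in>set ws. \<not> is_case e'"
    using snoc.prems(1) by (simp add: nice_seq_snoc)
  then have "neutral (app_seq (Var n) ws)"
    by (induction ws rule: rev_induct) (auto simp: app_seq_snoc app_seq_def intro: neutral.intros)
  moreover have "app_seq (Var n) ws \<in> SN"
    using snoc no_case by (simp add: nice_seq_def)
  ultimately show ?case
    using snoc.prems(2) by (simp add: app_seq_snoc neutral_App_SN)
qed

lemma Var_in_seq_arrow: "nice_set X \<Longrightarrow> Var n \<in> seq_arrow X"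
  unfolding nice_set_def seq_arrow_def using app_seq_Var_SN by blast

lemma seq_arrow_subset_SN: "X \<noteq> {} \<Longrightarrow> seq_arrow X \<subseteq> SN"
  unfolding seq_arrow_def using app_seq_SND by blast

lemma arrow_seq_arrow:
  "arrow K (seq_arrow X) = seq_arrow {ETrm u # ws | u ws. u \<in> K \<and> ws \<in> X}"
  unfolding arrow_def seq_arrow_def by (auto simp: app_seq_Cons) (metis app_seq_Cons)

lemma conj_set_seq_arrow:
  "conj_set (seq_arrow X) (seq_arrow Y) = seq_arrow ((#) Proj1 ` X \<union> (#) Proj2 ` Y)"
  unfolding conj_set_def seq_arrow_def by (auto simp: app_seq_Cons) (metis UnI1 UnI2 app_seq_Cons image_eqI)+

lemma disj_set_eq_seq_arrow:
  "disj_set K L = seq_arrow {[Case u v] | u v. u \<in> SN \<and> v \<in> SN \<and>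
      (\<forall>r\<in>K. subst_t u 0 r \<in> SN) \<and> (\<forall>s\<in>L. subst_t v 0 s \<in> SN)}"
  unfolding disj_set_def seq_arrow_def by (auto simp: app_seq_def) (metis foldl_Cons foldl_Nil)

lemma RR_eq_seq_arrow: "R \<in> RR \<Longrightarrow> \<exists>X. nice_set X \<and> X \<noteq> {} \<and> R = seq_arrow X"
proof (induction rule: RR.induct)
  case 1
  have "SN = seq_arrow {[]}"
    by (simp add: seq_arrow_def app_seq_def)
  then show ?case
    by (intro exI[of _ "{[]}"]) (simp add: nice_set_def nice_seq_def)
next
  case (2 K L)
  then obtain Y X where Y: "nice_set Y" "Y \<noteq> {}" "K = seq_arrow Y"
    and X: "nice_set X" "X \<noteq> {}" "L = seq_arrow X" by blast
  let ?X = "{ETrm u # ws | u ws. u \<in> K \<and> ws \<in> X}"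
  have "nice_set ?X"
    using X(1) seq_arrow_subset_SN[OF Y(2)] Y(3) ETrm_SN_e nice_seq_Cons
    unfolding nice_set_def by fastforce
  moreover have "?X \<noteq> {}"
    using Var_in_seq_arrow[OF Y(1)] Y(3) X(2) by blast
  ultimately show ?case
    using arrow_seq_arrow X(3) by blast
next
  case (3 K L)
  then obtain X Y where X: "nice_set X" "X \<noteq> {}" "K = seq_arrow X"
    and Y: "nice_set Y" "L = seq_arrow Y" by blast
  let ?X = "(#) Proj1 ` X \<union> (#) Proj2 ` Y"
  have "nice_set ?X"
    using X(1) Y(1) Proj1_SN_e Proj2_SN_e nice_seq_Cons unfolding nice_set_def by fastforce
  moreover have "?X \<noteq> {}"
    using X(2) by blast
  ultimately show ?case
    using conj_set_seq_arrow X(3) Y(2) by blast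
next
  case (4 K L)
  then obtain X Y where X: "nice_set X" "X \<noteq> {}" "K = seq_arrow X"
    and Y: "nice_set Y" "Y \<noteq> {}" "L = seq_arrow Y" by blast
  let ?X = "{[Case u v] | u v. u \<in> SN \<and> v \<in> SN \<and>
      (\<forall>r\<in>K. subst_t u 0 r \<in> SN) \<and> (\<forall>s\<in>L. subst_t v 0 s \<in> SN)}"
  have "nice_set ?X"
    using Case_SN_e unfolding nice_set_def nice_seq_def by auto
  moreover have "[Case (Var 0) (Var 0)] \<in> ?X"
    using seq_arrow_subset_SN[OF X(2)] seq_arrow_subset_SN[OF Y(2)] X(3) Y(3) Var_SN by auto
  ultimately show ?case
    using disj_set_eq_seq_arrow by blast
qed

theorem lemma6:
  assumes "R \<in> RR"
  shows "\<exists>X. nice_set X \<and> R = seq_arrow X"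
  using RR_eq_seq_arrow[OF assms] by blast

end
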